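(* Let $0<p<0.1$. If indefinite growth occurs, then either the event $E$ occurs, or else there exists a good sequence $R_1,\dots,R_{n+1}$ of rectangles such that the event $G(R_1)\cap\bigcap_{i=1}^n D(R_i,R_{i+1})$ occurs.
   Context: Local bootstrap percolation on $\mathbb{Z}^2$ with parameter $p\in(0,1)$: sites are empty ($\circ$), occupied ($\bullet$) or active ($\star$). The initial configuration $\sigma$ has independent sites; the origin is $\star$ with probability $p$, else $\circ$; every other site is $\bullet$ with probability $p$, else $\circ$. Synchronous deterministic updates: each $\bullet$ becomes $\star$ if some $\star$ is within $\ell^1$-distance $2$; each $\circ$ becomes $\star$ if at least two $\star$'s are within $\ell^1$-distance $1$; other states are unchanged. Indefinite growth: every site eventually becomes active. Let $q=-\log(1-p)$, $A=\lceil 1/\sqrt q\rceil$, $B=\lfloor q^{-1}\log q^{-1}\rfloor$. A rectangle is a set $R=\{a,\dots,c\}\times\{b,\dots,d\}\subset\mathbb{Z}^2$, with dimensions $\dim(R)=(c-a+1,d-b+1)$; its columns are the sets $\{x\}\times\{b,\dots,d\}$, $a\le x\le c$, and rows are defined analogously. $R$ has a double gap in the columns (resp. rows) if two consecutive columns (resp. rows) of $R$ consist entirely of sites that are $\circ$ in the initial configuration $\sigma$. $G(R)$ is the event that $R$ has no double gap in the columns or rows. For rectangles $R=\{x_1,\dots,x_2\}\times\{y_1,\dots,y_2\}\subseteq R'=\{X_1,\dots,X_2\}\times\{Y_1,\dots,Y_2\}$, $D(R,R')$ is the event that each of the (possibly empty) rectangles $\{X_1,\dots,x_1-1\}\times\{Y_1,\dots,Y_2\}$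 and $\{x_2+1,\dots,X_2\}\times\{Y_1,\dots,Y_2\}$ has no double gap in the columns, and each of $\{X_1,\dots,X_2\}\times\{Y_1,\dots,y_1-1\}$ and $\{X_1,\dots,X_2\}\times\{y_2+1,\dots,Y_2\}$ has no double gap in the rows. $E$ is the union of the events $G(R)$ over all rectangles $R$ containing $0$ with one dimension in $[B-A-10,B-A]$ and the other in $[1,A]$. A sequence of rectangles $R_1,\dots,R_{n+1}$ ($n\ge1$) with $\dim(R_i)=(a_i,b_i)$, $s_i=a_{i+1}-a_i$, $t_i=b_{i+1}-b_i$ is good if: (i) $0\in R_1\subseteq R_2\subseteq\dots\subseteq R_{n+1}$; (ii) $\min(a_1,b_1)\in[A,A+3]$; (iii) $a_n+b_n\le B$; (iv) $a_{n+1}+b_{n+1}>B$; (v) for $i=1,\dots,n$, $s_i\ge a_i\sqrt q$ or $t_i\ge b_i\sqrt q$; (vi) for $i=1,\dots,n$, $s_i<a_i\sqrt q+4$ and $t_i<b_i\sqrt q+4$. *)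

theory Defs
  imports Complex_Main
begin

datatype state = Empty | Occupied | Active

type_synonym site = "int \<times> int"
type_synonym config = "site \<Rightarrow> state"

definition l1dist :: "site \<Rightarrow> site \<Rightarrow> int" where
  "l1dist u v = \<bar>fst u - fst v\<bar> + \<bar>snd u - snd v\<bar>"

definition step :: "config \<Rightarrow> config" where
  "step \<sigma> x = (case \<sigma> x of
      Occupied \<Rightarrow> (if \<exists>y. l1dist x y \<le> 2 \<and> \<sigma> y = Active then Active else Occupied)
    | Empty \<Rightarrow> (if card {y. l1dist x y \<le> 1 \<and> \<sigma> y = Active} \<ge> 2 then Active else Empty)
    | Active \<Rightarrow> Active)"

definition evolve :: "config \<Rightarrow> nat \<Rightarrow> config" where
  "evolve \<sigma> t = (step ^^ t) \<sigma>"

definition indefinite_growth :: "config \<Rightarrow> bool" where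
  "indefinite_growth \<sigma> \<longleftrightarrow> (\<forall>x. \<exists>t. evolve \<sigma> t x = Active)"

definition qpar :: "real \<Rightarrow> real" where "qpar p = - ln (1 - p)"
definition Apar :: "real \<Rightarrow> int" where "Apar p = \<lceil>1 / sqrt (qpar p)\<rceil>"
definition Bpar :: "real \<Rightarrow> int" where "Bpar p = \<lfloor>(1 / qpar p) * ln (1 / qpar p)\<rfloor>"

text \<open>A rectangle {x1..x2} x {y1..y2} is represented by its bounds (x1,x2,y1,y2);
  genuine (non-empty) rectangles satisfy x1 \<le> x2 and y1 \<le> y2.\<close>
type_synonym rect = "int \<times> int \<times> int \<times> int"

definition rect_set :: "rect \<Rightarrow> site set" where
  "rect_set R = (case R of (x1,x2,y1,y2) \<Rightarrow> {x1..x2} \<times> {y1..y2})"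

definition is_rect :: "rect \<Rightarrow> bool" where
  "is_rect R = (case R of (x1,x2,y1,y2) \<Rightarrow> x1 \<le> x2 \<and> y1 \<le> y2)"

definition width :: "rect \<Rightarrow> int" where
  "width R = (case R of (x1,x2,y1,y2) \<Rightarrow> x2 - x1 + 1)"
definition height :: "rect \<Rightarrow> int" where
  "height R = (case R of (x1,x2,y1,y2) \<Rightarrow> y2 - y1 + 1)"

definition dgap_cols :: "config \<Rightarrow> rect \<Rightarrow> bool" where
  "dgap_cols \<sigma> R = (case R of (x1,x2,y1,y2) \<Rightarrow>
     (\<exists>x. x1 \<le> x \<and> x + 1 \<le> x2 \<and>
        (\<forall>y\<in>{y1..y2}. \<sigma> (x,y) = Empty \<and> \<sigma> (x+1,y) = Empty)))"

definition dgap_rows :: "config \<Rightarrow> rect \<Rightarrow> bool" where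
  "dgap_rows \<sigma> R = (case R of (x1,x2,y1,y2) \<Rightarrow>
     (\<exists>y. y1 \<le> y \<and> y + 1 \<le> y2 \<and>
        (\<forall>x\<in>{x1..x2}. \<sigma> (x,y) = Empty \<and> \<sigma> (x,y+1) = Empty)))"

definition Gev :: "config \<Rightarrow> rect \<Rightarrow> bool" where
  "Gev \<sigma> R \<longleftrightarrow> \<not> dgap_cols \<sigma> R \<and> \<not> dgap_rows \<sigma> R"

definition Dev :: "config \<Rightarrow> rect \<Rightarrow> rect \<Rightarrow> bool" where
  "Dev \<sigma> R R' = (case R of (x1,x2,y1,y2) \<Rightarrow> case R' of (X1,X2,Y1,Y2) \<Rightarrow>
      \<not> dgap_cols \<sigma> (X1, x1 - 1, Y1, Y2) \<and> \<not> dgap_cols \<sigma> (x2 + 1, X2, Y1, Y2) \<and>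
      \<not> dgap_rows \<sigma> (X1, X2, Y1, y1 - 1) \<and> \<not> dgap_rows \<sigma> (X1, X2, y2 + 1, Y2))"

definition Eev :: "real \<Rightarrow> config \<Rightarrow> bool" where
  "Eev p \<sigma> \<longleftrightarrow> (\<exists>R. is_rect R \<and> (0,0) \<in> rect_set R \<and>
     ((width R \<in> {Bpar p - Apar p - 10 .. Bpar p - Apar p} \<and> height R \<in> {1 .. Apar p}) \<or>
      (height R \<in> {Bpar p - Apar p - 10 .. Bpar p - Apar p} \<and> width R \<in> {1 .. Apar p})) \<and>
     Gev \<sigma> R)"

definition good_seq :: "real \<Rightarrow> nat \<Rightarrow> (nat \<Rightarrow> rect) \<Rightarrow> bool" where
  "good_seq p n R \<longleftrightarrow> n \<ge> 1 \<and>
     (\<forall>i\<in>{1..n+1}. is_rect (R i)) \<and>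
     (0,0) \<in> rect_set (R 1) \<and>
     (\<forall>i\<in>{1..n}. rect_set (R i) \<subseteq> rect_set (R (Suc i))) \<and>
     min (width (R 1)) (height (R 1)) \<in> {Apar p .. Apar p + 3} \<and>
     width (R n) + height (R n) \<le> Bpar p \<and>
     width (R (Suc n)) + height (R (Suc n)) > Bpar p \<and>
     (\<forall>i\<in>{1..n}.
        let a = real_of_int (width (R i)); b = real_of_int (height (R i));
            s = real_of_int (width (R (Suc i)) - width (R i));
            t = real_of_int (height (R (Suc i)) - height (R i)) in
        (s \<ge> a * sqrt (qpar p) \<or> t \<ge> b * sqrt (qpar p)) \<and>
        s < a * sqrt (qpar p) + 4 \<and> t < b * sqrt (qpar p) + 4)"

end

theory Submission
  imports Defs
begin

(*
  The origin is active, since otherwise no site ever changes. Grow a rectangle from the origin one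
  column or row at a time, absorbing a non-empty site at l1-distance at most 2 outside it; such a
  site always exists, for otherwise nothing outside the rectangle could ever become active. Each
  absorbed column (row) is witnessed by a non-empty site in it or in the next one outwards, so
  between any two rectangles of the chain, and inside each of them, there is no double gap: this
  gives G for every rectangle of the chain and D for every pair.

  The side lengths perform a walk with unit steps and strictly growing perimeter. Either the long
  side reaches B - A while the short side is still at most A, which is the event E, or the short
  side reaches A first. From that rectangle on, repeatedly jumping to the first rectangle in which
  one side has grown by the factor sqrt q gives a good sequence, the overshoot being at most one.
*)

text \<open>One move for each position of a non-empty site outside the rectangle at l1-distance at
  most 2 from it; the move absorbs the column or row of that site next to the rectangle.\<close>
fun grow_step :: "config \<Rightarrow> rect \<Rightarrow> rect \<Rightarrow> bool" where
"grow_step \<sigma> (x1,x2,y1,y2) R' = (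
 (R' = (x1,x2+1,y1,y2) \<and> (\<exists>y\<in>{y1..y2}. \<sigma>(x2+1,y)\<noteq>Empty \<or> \<sigma>(x2+2,y)\<noteq>Empty)) \<or>
 (R' = (x1-1,x2,y1,y2) \<and> (\<exists>y\<in>{y1..y2}. \<sigma>(x1-1,y)\<noteq>Empty \<or> \<sigma>(x1-2,y)\<noteq>Empty)) \<or>
 (R' = (x1,x2,y1,y2+1) \<and> (\<exists>x\<in>{x1..x2}. \<sigma>(x,y2+1)\<noteq>Empty \<or> \<sigma>(x,y2+2)\<noteq>Empty)) \<or>
 (R' = (x1,x2,y1-1,y2) \<and> (\<exists>x\<in>{x1..x2}. \<sigma>(x,y1-1)\<noteq>Empty \<or> \<sigma>(x,y1-2)\<noteq>Empty)) \<or>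
 (R' = (x1,x2+1,y1,y2+1) \<and> \<sigma>(x2+1,y2+1)\<noteq>Empty) \<or>
 (R' = (x1-1,x2,y1,y2+1) \<and> \<sigma>(x1-1,y2+1)\<noteq>Empty) \<or>
 (R' = (x1,x2+1,y1-1,y2) \<and> \<sigma>(x2+1,y1-1)\<noteq>Empty) \<or>
 (R' = (x1-1,x2,y1-1,y2) \<and> \<sigma>(x1-1,y1-1)\<noteq>Empty))"

lemma evolve_Suc: "evolve \<sigma> (Suc t) = step (evolve \<sigma> t)"
  by (simp add: evolve_def)

lemma step_without_active:
  assumes "\<forall>x. \<sigma> x \<noteq> Active" shows "step \<sigma> = \<sigma>"
proof
  fix x
  have "{y. l1dist x y \<le> 1 \<and> \<sigma> y = Active} = {}" using assms by blast
  then have no_neighbours: "card {y. l1dist x y \<le> 1 \<and> \<sigma> y = Active} = 0" by (metis card.empty)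
  show "step \<sigma> x = \<sigma> x" using assms by (cases "\<sigma> x") (simp_all add: step_def no_neighbours)
qed

lemma indefinite_growth_has_active:
  assumes "indefinite_growth \<sigma>" shows "\<exists>x. \<sigma> x = Active"
proof (rule ccontr)
  assume "\<nexists>x. \<sigma> x = Active"
  then have "evolve \<sigma> t = \<sigma>" for t
    by (induction t) (simp_all add: evolve_Suc step_without_active, simp add: evolve_def)
  with assms \<open>\<nexists>x. \<sigma> x = Active\<close> show False by (simp add: indefinite_growth_def)
qed

lemma empty_near_stuck_rect:
  assumes stuck: "\<nexists>R'. grow_step \<sigma> (x1,x2,y1,y2) R'"
    and out: "(a,b) \<notin> {x1..x2} \<times> {y1..y2}" and inside: "(c,d) \<in> {x1..x2} \<times> {y1..y2}"
    and near: "l1dist (a,b) (c,d) \<le> 2"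
  shows "\<sigma> (a,b) = Empty"
proof -
  from stuck have sides:
      "\<forall>y\<in>{y1..y2}. \<sigma>(x2+1,y)=Empty \<and> \<sigma>(x2+2,y)=Empty \<and> \<sigma>(x1-1,y)=Empty \<and> \<sigma>(x1-2,y)=Empty"
      "\<forall>x\<in>{x1..x2}. \<sigma>(x,y2+1)=Empty \<and> \<sigma>(x,y2+2)=Empty \<and> \<sigma>(x,y1-1)=Empty \<and> \<sigma>(x,y1-2)=Empty"
    and corners: "\<sigma>(x2+1,y2+1)=Empty" "\<sigma>(x1-1,y2+1)=Empty" "\<sigma>(x2+1,y1-1)=Empty" "\<sigma>(x1-1,y1-1)=Empty"
    by (simp_all only: grow_step.simps, auto)
  have "\<bar>a-c\<bar> + \<bar>b-d\<bar> \<le> 2" "x1 \<le> c" "c \<le> x2" "y1 \<le> d" "d \<le> y2"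
    using near inside by (auto simp: l1dist_def)
  then consider "a = x2+1 \<or> a = x2+2" "b \<in> {y1..y2}" | "a = x1-1 \<or> a = x1-2" "b \<in> {y1..y2}"
    | "b = y2+1 \<or> b = y2+2" "a \<in> {x1..x2}" | "b = y1-1 \<or> b = y1-2" "a \<in> {x1..x2}"
    | "(a,b) \<in> {(x2+1,y2+1), (x1-1,y2+1), (x2+1,y1-1), (x1-1,y1-1)}"
    using out unfolding mem_Times_iff atLeastAtMost_iff insert_iff prod.inject empty_iff fst_conv snd_conv
    by (smt (verit))
  then show ?thesis using sides corners by cases auto
qed

lemma evolve_outside_stuck_rect:
  assumes stuck: "\<nexists>R'. grow_step \<sigma> (x1,x2,y1,y2) R'"
    and inactive: "\<forall>z. z \<notin> {x1..x2} \<times> {y1..y2} \<longrightarrow> \<sigma> z \<noteq> Active"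
    and out: "z \<notin> {x1..x2} \<times> {y1..y2}"
  shows "evolve \<sigma> t z = \<sigma> z"
  using out
proof (induction t arbitrary: z)
  case 0
  then show ?case by (simp add: evolve_def)
next
  case (Suc t)
  let ?s = "evolve \<sigma> t"
  have active_inside: "y \<in> {x1..x2} \<times> {y1..y2}" if "?s y = Active" for y
    using Suc.IH inactive that by metis
  obtain a b where z: "z = (a,b)" by fastforce
  show ?case
  proof (cases "\<sigma> z")
    case Empty
    let ?S = "{y. l1dist z y \<le> 1 \<and> ?s y = Active}"
    have "\<forall>u\<in>?S. \<forall>v\<in>?S. u = v"
    proof (intro ballI)
      fix u v assume "u \<in> ?S" "v \<in> ?S"
      moreover have "u \<in> {x1..x2} \<times> {y1..y2}" "v \<in> {x1..x2} \<times> {y1..y2}"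
        using calculation active_inside by auto
      moreover obtain c d e f where "u = (c,d)" "v = (e,f)" by fastforce
      ultimately show "u = v" using Suc.prems z by (auto simp: l1dist_def)
    qed
    then have "card ?S \<le> 1"
      by (cases "finite ?S") (simp_all add: card_le_Suc0_iff_eq)
    then show ?thesis using Empty Suc.IH[OF Suc.prems] by (simp add: evolve_Suc step_def)
  next
    case Occupied
    have "\<sigma> y' \<noteq> Empty" if "y' = z" for y' using Occupied that by simp
    then have "\<nexists>y. l1dist z y \<le> 2 \<and> ?s y = Active"
      using empty_near_stuck_rect[OF stuck] active_inside Suc.prems z by fastforce
    then show ?thesis using Occupied Suc.IH[OF Suc.prems] by (simp add: evolve_Suc step_def)
  next
    case Active
    then show ?thesis using inactive Suc.prems by blast
  qed
qed

lemma grow_step_exists: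
  assumes growth: "indefinite_growth \<sigma>" and seed: "\<forall>x. x \<noteq> (0,0) \<longrightarrow> \<sigma> x \<noteq> Active"
    and "(0,0) \<in> rect_set R"
  shows "\<exists>R'. grow_step \<sigma> R R'"
proof (rule ccontr)
  assume stuck: "\<nexists>R'. grow_step \<sigma> R R'"
  obtain x1 x2 y1 y2 where R: "R = (x1,x2,y1,y2)" by (cases R)
  have inactive: "\<forall>z. z \<notin> {x1..x2} \<times> {y1..y2} \<longrightarrow> \<sigma> z \<noteq> Active"
    using seed assms(3) R by (auto simp: rect_set_def)
  let ?z = "(x2 + 1, y1)"
  obtain t where "evolve \<sigma> t ?z = Active" using growth by (auto simp: indefinite_growth_def)
  moreover have "evolve \<sigma> t ?z = \<sigma> ?z"
    using evolve_outside_stuck_rect[OF stuck[unfolded R] inactive] by simp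
  ultimately show False using inactive by simp
qed

lemma grow_step_cases:
  assumes "grow_step \<sigma> (x1,x2,y1,y2) R'"
  shows "R' \<in> {(x1,x2+1,y1,y2), (x1-1,x2,y1,y2), (x1,x2,y1,y2+1), (x1,x2,y1-1,y2),
    (x1,x2+1,y1,y2+1), (x1-1,x2,y1,y2+1), (x1,x2+1,y1-1,y2), (x1-1,x2,y1-1,y2)}"
  using assms by (simp only: grow_step.simps insert_iff) blast

lemma grow_step_enlarges:
  assumes "is_rect R" "grow_step \<sigma> R R'"
  shows "is_rect R'" "rect_set R \<subseteq> rect_set R'"
    "width R \<le> width R' \<and> width R' \<le> width R + 1"
    "height R \<le> height R' \<and> height R' \<le> height R + 1"
    "width R + height R < width R' + height R'"
proof -
  obtain x1 x2 y1 y2 where R: "R = (x1,x2,y1,y2)" by (cases R)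
  have "x1 \<le> x2" "y1 \<le> y2" using assms(1) R by (auto simp: is_rect_def)
  with grow_step_cases[OF assms(2)[unfolded R]] show
    "is_rect R'" "rect_set R \<subseteq> rect_set R'"
    "width R \<le> width R' \<and> width R' \<le> width R + 1"
    "height R \<le> height R' \<and> height R' \<le> height R + 1"
    "width R + height R < width R' + height R'"
    unfolding R by (auto simp: is_rect_def rect_set_def width_def height_def)
qed

text \<open>Invariant of the growth between an earlier rectangle and a later one: it excludes double
  gaps in the four strips of the later rectangle beyond the earlier one.\<close>
fun bridged :: "config \<Rightarrow> rect \<Rightarrow> rect \<Rightarrow> bool" where
"bridged \<sigma> (x1,x2,y1,y2) (X1,X2,Y1,Y2) = (
 (\<forall>c. x2+1 \<le> c \<and> c \<le> X2 \<longrightarrow> (\<exists>y\<in>{Y1..Y2}. \<sigma>(c,y)\<noteq>Empty \<or> \<sigma>(c+1,y)\<noteq>Empty)) \<and>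
 (\<forall>c. X1 \<le> c \<and> c \<le> x1-1 \<longrightarrow> (\<exists>y\<in>{Y1..Y2}. \<sigma>(c,y)\<noteq>Empty \<or> \<sigma>(c-1,y)\<noteq>Empty)) \<and>
 (\<forall>r. y2+1 \<le> r \<and> r \<le> Y2 \<longrightarrow> (\<exists>x\<in>{X1..X2}. \<sigma>(x,r)\<noteq>Empty \<or> \<sigma>(x,r+1)\<noteq>Empty)) \<and>
 (\<forall>r. Y1 \<le> r \<and> r \<le> y1-1 \<longrightarrow> (\<exists>x\<in>{X1..X2}. \<sigma>(x,r)\<noteq>Empty \<or> \<sigma>(x,r-1)\<noteq>Empty)))"

lemma bridged_extend:
  assumes I: "bridged \<sigma> R (X1,X2,Y1,Y2)"
    and bounds: "X1 - 1 \<le> X1'" "X1' \<le> X1" "X2 \<le> X2'" "X2' \<le> X2 + 1"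
      "Y1 - 1 \<le> Y1'" "Y1' \<le> Y1" "Y2 \<le> Y2'" "Y2' \<le> Y2 + 1"
    and right: "X2' = X2 + 1 \<Longrightarrow> \<exists>y\<in>{Y1'..Y2'}. \<sigma>(X2+1,y)\<noteq>Empty \<or> \<sigma>(X2+2,y)\<noteq>Empty"
    and left: "X1' = X1 - 1 \<Longrightarrow> \<exists>y\<in>{Y1'..Y2'}. \<sigma>(X1-1,y)\<noteq>Empty \<or> \<sigma>(X1-2,y)\<noteq>Empty"
    and top: "Y2' = Y2 + 1 \<Longrightarrow> \<exists>x\<in>{X1'..X2'}. \<sigma>(x,Y2+1)\<noteq>Empty \<or> \<sigma>(x,Y2+2)\<noteq>Empty"
    and bottom: "Y1' = Y1 - 1 \<Longrightarrow> \<exists>x\<in>{X1'..X2'}. \<sigma>(x,Y1-1)\<noteq>Empty \<or> \<sigma>(x,Y1-2)\<noteq>Empty"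
  shows "bridged \<sigma> R (X1',X2',Y1',Y2')"
proof (cases R)
  case (fields x1 x2 y1 y2)
  have wider: "\<exists>z\<in>{u'..v'}. P z" if "\<exists>z\<in>{u..v::int}. P z" "u' \<le> u" "v \<le> v'" for P u v u' v'
    using that by (meson atLeastAtMost_iff order_trans)
  show ?thesis
    unfolding fields bridged.simps
  proof (intro conjI allI impI)
    fix c assume c: "x2 + 1 \<le> c \<and> c \<le> X2'"
    show "\<exists>y\<in>{Y1'..Y2'}. \<sigma>(c,y)\<noteq>Empty \<or> \<sigma>(c+1,y)\<noteq>Empty"
    proof (cases "c \<le> X2")
      case True
      then show ?thesis using I c fields bounds wider[where u=Y1 and v=Y2] by auto
    next
      case False
      then have "c = X2 + 1" "X2' = X2 + 1" using c bounds by auto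
      then show ?thesis using right by (simp add: add.assoc)
    qed
  next
    fix c assume c: "X1' \<le> c \<and> c \<le> x1 - 1"
    show "\<exists>y\<in>{Y1'..Y2'}. \<sigma>(c,y)\<noteq>Empty \<or> \<sigma>(c-1,y)\<noteq>Empty"
    proof (cases "X1 \<le> c")
      case True
      then show ?thesis using I c fields bounds wider[where u=Y1 and v=Y2] by auto
    next
      case False
      then have "c = X1 - 1" "X1' = X1 - 1" using c bounds by auto
      then show ?thesis using left by (simp add: diff_diff_eq)
    qed
  next
    fix r assume r: "y2 + 1 \<le> r \<and> r \<le> Y2'"
    show "\<exists>x\<in>{X1'..X2'}. \<sigma>(x,r)\<noteq>Empty \<or> \<sigma>(x,r+1)\<noteq>Empty"
    proof (cases "r \<le> Y2")
      case True
      then show ?thesis using I r fields bounds wider[where u=X1 and v=X2] by auto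
    next
      case False
      then have "r = Y2 + 1" "Y2' = Y2 + 1" using r bounds by auto
      then show ?thesis using top by (simp add: add.assoc)
    qed
  next
    fix r assume r: "Y1' \<le> r \<and> r \<le> y1 - 1"
    show "\<exists>x\<in>{X1'..X2'}. \<sigma>(x,r)\<noteq>Empty \<or> \<sigma>(x,r-1)\<noteq>Empty"
    proof (cases "Y1 \<le> r")
      case True
      then show ?thesis using I r fields bounds wider[where u=X1 and v=X2] by auto
    next
      case False
      then have "r = Y1 - 1" "Y1' = Y1 - 1" using r bounds by auto
      then show ?thesis using bottom by (simp add: diff_diff_eq)
    qed
  qed
qed

lemma bridged_grow_step:
  assumes "bridged \<sigma> R R'" "grow_step \<sigma> R' R''" "is_rect R'"
  shows "bridged \<sigma> R R''"
proof (cases R')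
  case (fields X1 X2 Y1 Y2)
  have "X1 \<le> X2" "Y1 \<le> Y2" using assms(3) fields by (auto simp: is_rect_def)
  with assms(2) show ?thesis unfolding fields
    by (simp only: grow_step.simps)
      (elim disjE conjE; hypsubst; rule bridged_extend[OF assms(1)[unfolded fields]]; force)
qed

lemma bridged_imp_Dev: "bridged \<sigma> R R' \<Longrightarrow> Dev \<sigma> R R'"
proof (cases R, cases R')
  fix x1 x2 y1 y2 X1 X2 Y1 Y2
  assume "bridged \<sigma> R R'" "R = (x1,x2,y1,y2)" "R' = (X1,X2,Y1,Y2)"
  then show ?thesis
    unfolding Dev_def dgap_cols_def dgap_rows_def
    by simp (smt (verit) atLeastAtMost_iff)
qed

lemma bridged_imp_Gev:
  assumes "bridged \<sigma> (0,0,0,0) R" "\<sigma> (0,0) \<noteq> Empty" "(0,0) \<in> rect_set R"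
  shows "Gev \<sigma> R"
proof (cases R)
  case (fields X1 X2 Y1 Y2)
  have box: "X1 \<le> 0" "0 \<le> X2" "Y1 \<le> 0" "0 \<le> Y2" using assms(3) fields by (auto simp: rect_set_def)
  show ?thesis
  proof (unfold Gev_def, intro conjI notI)
    assume "dgap_cols \<sigma> R"
    then obtain x where "X1 \<le> x" "x + 1 \<le> X2" "\<forall>y\<in>{Y1..Y2}. \<sigma> (x,y) = Empty \<and> \<sigma> (x+1,y) = Empty"
      using fields by (auto simp: dgap_cols_def)
    then show False using box assms(1,2) fields
      by simp (smt (verit) atLeastAtMost_iff)
  next
    assume "dgap_rows \<sigma> R"
    then obtain y where "Y1 \<le> y" "y + 1 \<le> Y2" "\<forall>x\<in>{X1..X2}. \<sigma> (x,y) = Empty \<and> \<sigma> (x,y+1) = Empty"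
      using fields by (auto simp: dgap_rows_def)
    then show False using box assms(1,2) fields
      by simp (smt (verit) atLeastAtMost_iff)
  qed
qed

definition unit_steps :: "(nat \<Rightarrow> int) \<Rightarrow> bool" where
  "unit_steps f \<longleftrightarrow> (\<forall>j. f j \<le> f (Suc j) \<and> f (Suc j) \<le> f j + 1)"

lemma unit_steps_mono: "unit_steps f \<Longrightarrow> j \<le> m \<Longrightarrow> f j \<le> f m"
  unfolding unit_steps_def by (rule lift_Suc_mono_le) auto

lemma unit_steps_hits:
  assumes "unit_steps f" "f 0 \<le> v" "v \<le> f m"
  shows "\<exists>j\<le>m. f j = v"
  using assms by (intro nat_ivt_aux) (auto simp: unit_steps_def abs_le_iff, smt (verit))

lemma unit_steps_max: "unit_steps f \<Longrightarrow> unit_steps g \<Longrightarrow> unit_steps (\<lambda>j. max (f j) (g j))"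
  unfolding unit_steps_def by (smt (verit))

lemma unit_steps_min: "unit_steps f \<Longrightarrow> unit_steps g \<Longrightarrow> unit_steps (\<lambda>j. min (f j) (g j))"
  unfolding unit_steps_def by (smt (verit))

lemma strict_mono_int_grows:
  fixes S :: "nat \<Rightarrow> int"
  assumes "\<And>j. S j < S (Suc j)"
  shows "S k + int N \<le> S (k + N)"
proof (induction N)
  case (Suc N)
  then show ?case using assms[of "k + N"] by simp
qed simp

lemma greedy_chain:
  fixes S :: "nat \<Rightarrow> int" and Q :: "nat \<Rightarrow> nat \<Rightarrow> bool"
  assumes step: "\<And>k. \<exists>k'>k. Q k k'" and strict: "\<And>j. S j < S (Suc j)" and start: "S k \<le> B"
  shows "\<exists>n idx. 1 \<le> n \<and> idx 1 = k \<and> (\<forall>i\<in>{1..n}. idx i < idx (Suc i) \<and> Q (idx i) (idx (Suc i))) \<and>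
    S (idx n) \<le> B \<and> B < S (idx (Suc n))"
proof -
  define nxt where "nxt k = (SOME k'. k < k' \<and> Q k k')" for k
  have nxt: "k < nxt k \<and> Q k (nxt k)" for k
    unfolding nxt_def using someI_ex[OF step[of k]] by simp
  define idx where "idx i = (nxt ^^ (i - 1)) k" for i
  have idx_Suc: "idx (Suc i) = nxt (idx i)" if "1 \<le> i" for i
    using that by (cases i) (simp_all add: idx_def)
  have climb: "S k + int i \<le> S (idx (Suc i))" for i
  proof (induction i)
    case 0
    then show ?case by (simp add: idx_def)
  next
    case (Suc i)
    have "S (idx (Suc i)) < S (idx (Suc (Suc i)))"
      using lift_Suc_mono_less[of S, OF strict] nxt idx_Suc[of "Suc i"] by simp
    with Suc show ?case by simp
  qed
  have "B < S (idx (Suc (nat (B - S k) + 1)))"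
    using climb[of "nat (B - S k) + 1"] by linarith
  then have "\<exists>i. B < S (idx (Suc i))" by blast
  define n where "n = (LEAST i. B < S (idx (Suc i)))"
  have above: "B < S (idx (Suc n))" unfolding n_def by (rule LeastI_ex) fact
  have "n \<noteq> 0" using above start by (cases n) (auto simp: idx_def)
  then have below: "S (idx n) \<le> B"
    using not_less_Least[of "n - 1" "\<lambda>i. B < S (idx (Suc i))"] unfolding n_def[symmetric] by simp
  show ?thesis
    using \<open>n \<noteq> 0\<close> above below nxt idx_Suc by (intro exI[of _ n] exI[of _ idx]) (auto simp: idx_def)
qed

definition good_step :: "real \<Rightarrow> int \<Rightarrow> int \<Rightarrow> int \<Rightarrow> int \<Rightarrow> bool" where
  "good_step \<theta> a b a' b' \<longleftrightarrow>
     (real_of_int (a' - a) \<ge> real_of_int a * \<theta> \<or> real_of_int (b' - b) \<ge> real_of_int b * \<theta>) \<and>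
     real_of_int (a' - a) < real_of_int a * \<theta> + 4 \<and> real_of_int (b' - b) < real_of_int b * \<theta> + 4"

lemma exists_good_step:
  fixes a b :: "nat \<Rightarrow> int" and \<theta> :: real
  assumes unit: "unit_steps a" "unit_steps b" and grows: "\<And>j. a j + b j < a (Suc j) + b (Suc j)"
    and pos: "0 < a k" "0 < b k" "0 < \<theta>"
  shows "\<exists>k'>k. good_step \<theta> (a k) (b k) (a k') (b k')"
proof -
  define P where "P j \<longleftrightarrow> real_of_int (a j - a k) \<ge> a k * \<theta> \<or> real_of_int (b j - b k) \<ge> b k * \<theta>" for j
  define N where "N = nat \<lceil>(a k + b k) * \<theta>\<rceil> + 1"
  have "P (k + N)"
  proof (rule ccontr)
    have "a k + b k + int N \<le> a (k + N) + b (k + N)"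
      using strict_mono_int_grows[of "\<lambda>j. a j + b j", OF grows] .
    then have "real N \<le> real_of_int (a (k + N) - a k) + real_of_int (b (k + N) - b k)"
      by linarith
    moreover have "(a k + b k) * \<theta> + 1 \<le> real N" unfolding N_def by linarith
    moreover assume "\<not> P (k + N)"
    ultimately show False unfolding P_def by (simp add: algebra_simps)
  qed
  \<comment> \<open>The first time one side has grown by the factor \<open>\<theta>\<close>; since sides grow by at most
    one per step, the upper bounds then hold with margin 1.\<close>
  define k' where "k' = (LEAST j. P j)"
  have "P k'" unfolding k'_def by (rule LeastI) fact
  moreover have "\<not> P j" if "j \<le> k" for j
  proof -
    have "real_of_int (a j - a k) \<le> 0" "real_of_int (b j - b k) \<le> 0"
      using unit_steps_mono[OF unit(1) that] unit_steps_mono[OF unit(2) that] by simp_all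
    moreover have "0 < a k * \<theta>" "0 < b k * \<theta>" using pos by simp_all
    ultimately show ?thesis unfolding P_def by linarith
  qed
  ultimately have "k < k'" by (meson not_le)
  then have "\<not> P (k' - 1)" using not_less_Least[of "k' - 1" P] unfolding k'_def by simp
  moreover have "a k' \<le> a (k' - 1) + 1" "b k' \<le> b (k' - 1) + 1"
    using unit \<open>k < k'\<close> unfolding unit_steps_def by (metis Suc_pred' gr_implies_not0 not_gr0)+
  ultimately have "real_of_int (a k' - a k) < a k * \<theta> + 1" "real_of_int (b k' - b k) < b k * \<theta> + 1"
    unfolding P_def by simp_all
  then have "good_step \<theta> (a k) (b k) (a k') (b k')"
    using \<open>P k'\<close> unfolding P_def good_step_def by simp
  with \<open>k < k'\<close> show ?thesis by blast
qed

lemma dimension_walk_dichotomy: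
  fixes a b :: "nat \<Rightarrow> int" and A B :: int and \<theta> :: real
  assumes start: "a 0 = 1" "b 0 = 1" and unit: "unit_steps a" "unit_steps b"
    and grows: "\<And>j. a j + b j < a (Suc j) + b (Suc j)"
    and AB: "1 \<le> A" "A < B" and \<theta>: "0 < \<theta>"
  shows "(\<exists>j. max (a j) (b j) = B - A \<and> min (a j) (b j) \<le> A) \<or>
    (\<exists>n idx. 1 \<le> n \<and> min (a (idx 1)) (b (idx 1)) = A \<and>
       a (idx n) + b (idx n) \<le> B \<and> B < a (idx (Suc n)) + b (idx (Suc n)) \<and>
       (\<forall>i\<in>{1..n}. idx i < idx (Suc i) \<and>
          good_step \<theta> (a (idx i)) (b (idx i)) (a (idx (Suc i))) (b (idx (Suc i)))))"
    (is "?short \<or> ?good")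
proof (cases ?short)
  case False
  let ?mx = "\<lambda>j. max (a j) (b j)" and ?mn = "\<lambda>j. min (a j) (b j)"
  let ?J = "nat (2 * (B - A))"
  have "2 + 2 * (B - A) \<le> a ?J + b ?J"
    using strict_mono_int_grows[of "\<lambda>j. a j + b j" 0 ?J, OF grows] start AB by simp
  then have "B - A \<le> ?mx ?J" by (simp add: max_def)
  then obtain j1 where j1: "?mx j1 = B - A"
    using unit_steps_hits[OF unit_steps_max[OF unit], of "B - A" ?J] start AB by auto
  with False have "A < ?mn j1" by auto
  then obtain j0 where j0: "j0 \<le> j1" "?mn j0 = A"
    using unit_steps_hits[OF unit_steps_min[OF unit], of A j1] start AB by auto
  have "?mx j0 \<le> ?mx j1" by (rule unit_steps_mono[OF unit_steps_max[OF unit] j0(1)])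
  with j0 j1 have "a j0 + b j0 \<le> B" by linarith
  moreover have "\<exists>k'>k. good_step \<theta> (a k) (b k) (a k') (b k')" for k
    using unit_steps_mono[OF unit(1), of 0 k] unit_steps_mono[OF unit(2), of 0 k] start \<theta>
    by (intro exists_good_step[OF unit grows]) auto
  ultimately have ?good
    using greedy_chain[of "\<lambda>k k'. good_step \<theta> (a k) (b k) (a k') (b k')" "\<lambda>j. a j + b j" j0 B] grows j0(2)
    by metis
  then show ?thesis ..
qed simp

lemma parameter_bounds:
  assumes "0 < p" "p < 1/10"
  shows "0 < sqrt (qpar p)" "1 \<le> Apar p" "Apar p < Bpar p"
proof -
  have "ln (1 - p) < 0" using assms by (intro ln_less_zero) auto
  then have q_pos: "0 < qpar p" by (simp add: qpar_def)
  have "qpar p = ln (1 / (1 - p))" using assms unfolding qpar_def by (subst ln_div) auto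
  also have "\<dots> \<le> 1 / (1 - p) - 1" using assms by (intro ln_le_minus_one) simp
  also have "\<dots> < 1/9" using assms by (simp add: field_simps)
  finally have "qpar p < 1/9" .
  define u where "u = 1 / qpar p"
  have "9 < u" using q_pos \<open>qpar p < 1/9\<close> unfolding u_def by (simp add: field_simps)
  have "1 \<le> ln u" using exp_le \<open>9 < u\<close> ln_ge_iff[of u 1] by simp
  have "3 \<le> sqrt u" using \<open>9 < u\<close> by (intro real_le_rsqrt) simp
  have "0 \<le> u" using \<open>9 < u\<close> by simp
  have "3 * sqrt u \<le> sqrt u * sqrt u" using \<open>3 \<le> sqrt u\<close> \<open>0 \<le> u\<close> by (intro mult_right_mono) auto
  also have "\<dots> = u" using \<open>0 \<le> u\<close> by simp
  also have "\<dots> \<le> u * ln u" using \<open>1 \<le> ln u\<close> \<open>0 \<le> u\<close> by (simp add: mult_le_cancel_left1)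
  finally have "sqrt u + 2 \<le> u * ln u" using \<open>3 \<le> sqrt u\<close> by linarith
  moreover have "Apar p = \<lceil>sqrt u\<rceil>" unfolding Apar_def u_def by (simp add: real_sqrt_divide)
  moreover have "Bpar p = \<lfloor>u * ln u\<rfloor>" unfolding Bpar_def u_def by simp
  moreover have "\<lceil>sqrt u\<rceil> < sqrt u + 1" "u * ln u - 1 < \<lfloor>u * ln u\<rfloor>" by linarith+
  ultimately show "1 \<le> Apar p" "Apar p < Bpar p"
    using \<open>3 \<le> sqrt u\<close> by linarith+
  show "0 < sqrt (qpar p)" using q_pos by simp
qed

primrec growth_chain :: "config \<Rightarrow> nat \<Rightarrow> rect" where
  "growth_chain \<sigma> 0 = (0,0,0,0)"
| "growth_chain \<sigma> (Suc j) = (SOME R'. grow_step \<sigma> (growth_chain \<sigma> j) R')"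

lemma growth_chain_SucI:
  "\<exists>R'. grow_step \<sigma> (growth_chain \<sigma> j) R' \<Longrightarrow> grow_step \<sigma> (growth_chain \<sigma> j) (growth_chain \<sigma> (Suc j))"
  unfolding growth_chain.simps(2) by (rule someI_ex)

context
  fixes \<sigma> :: config
  assumes growth: "indefinite_growth \<sigma>" and seed: "\<forall>x. x \<noteq> (0,0) \<longrightarrow> \<sigma> x \<noteq> Active"
begin

lemma origin_active: "\<sigma> (0,0) = Active"
  using indefinite_growth_has_active[OF growth] seed by metis

lemma growth_chain_grow_step:
  "is_rect (growth_chain \<sigma> j) \<and> (0,0) \<in> rect_set (growth_chain \<sigma> j) \<and>
   grow_step \<sigma> (growth_chain \<sigma> j) (growth_chain \<sigma> (Suc j))"
proof (induction j)
  case 0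
  have "is_rect (growth_chain \<sigma> 0)" "(0,0) \<in> rect_set (growth_chain \<sigma> 0)"
    by (simp_all add: is_rect_def rect_set_def)
  then show ?case using growth_chain_SucI grow_step_exists[OF growth seed] by blast
next
  case (Suc j)
  then have "is_rect (growth_chain \<sigma> (Suc j))" "(0,0) \<in> rect_set (growth_chain \<sigma> (Suc j))"
    using grow_step_enlarges(1,2) by blast+
  then show ?case using growth_chain_SucI grow_step_exists[OF growth seed] by blast
qed

lemma growth_chain_unit_steps:
  "unit_steps (\<lambda>j. width (growth_chain \<sigma> j))" "unit_steps (\<lambda>j. height (growth_chain \<sigma> j))"
  unfolding unit_steps_def using grow_step_enlarges(3,4) growth_chain_grow_step by blast+

lemma growth_chain_perimeter_grows:
  "width (growth_chain \<sigma> j) + height (growth_chain \<sigma> j)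
     < width (growth_chain \<sigma> (Suc j)) + height (growth_chain \<sigma> (Suc j))"
  using grow_step_enlarges(5) growth_chain_grow_step by blast

lemma growth_chain_mono_bridged:
  assumes "j \<le> m"
  shows "rect_set (growth_chain \<sigma> j) \<subseteq> rect_set (growth_chain \<sigma> m) \<and>
    bridged \<sigma> (growth_chain \<sigma> j) (growth_chain \<sigma> m)"
  using assms
proof (induction m rule: dec_induct)
  case base
  show ?case by (cases "growth_chain \<sigma> j") simp
next
  case (step m)
  then show ?case
    using growth_chain_grow_step[of m] grow_step_enlarges(2) bridged_grow_step by blast
qed

lemma growth_chain_Gev: "Gev \<sigma> (growth_chain \<sigma> j)"
proof (rule bridged_imp_Gev)
  show "bridged \<sigma> (0,0,0,0) (growth_chain \<sigma> j)"
    using growth_chain_mono_bridged[of 0 j] by simp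
  show "\<sigma> (0,0) \<noteq> Empty" using origin_active by simp
  show "(0,0) \<in> rect_set (growth_chain \<sigma> j)" using growth_chain_grow_step by blast
qed

lemma growth_chain_Eev:
  assumes "max (width (growth_chain \<sigma> j)) (height (growth_chain \<sigma> j)) = Bpar p - Apar p"
    and "min (width (growth_chain \<sigma> j)) (height (growth_chain \<sigma> j)) \<le> Apar p"
  shows "Eev p \<sigma>"
proof -
  have "is_rect (growth_chain \<sigma> j)" "(0,0) \<in> rect_set (growth_chain \<sigma> j)"
    using growth_chain_grow_step by blast+
  moreover have "1 \<le> width (growth_chain \<sigma> j)" "1 \<le> height (growth_chain \<sigma> j)"
    using calculation(1) by (auto simp: is_rect_def width_def height_def split: prod.splits)
  ultimately show ?thesis
    unfolding Eev_def using assms growth_chain_Gev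
    by (intro exI[of _ "growth_chain \<sigma> j"]) (auto simp: max_def min_def split: if_splits)
qed

lemma growth_chain_good_seq:
  fixes idx :: "nat \<Rightarrow> nat"
  defines "R i \<equiv> growth_chain \<sigma> (idx i)"
  assumes "1 \<le> n" and "min (width (R 1)) (height (R 1)) = Apar p"
    and "width (R n) + height (R n) \<le> Bpar p" and "Bpar p < width (R (Suc n)) + height (R (Suc n))"
    and steps: "\<forall>i\<in>{1..n}. idx i < idx (Suc i) \<and>
      good_step (sqrt (qpar p)) (width (R i)) (height (R i)) (width (R (Suc i))) (height (R (Suc i)))"
  shows "good_seq p n R \<and> Gev \<sigma> (R 1) \<and> (\<forall>i\<in>{1..n}. Dev \<sigma> (R i) (R (Suc i)))"
proof -
  have nested: "rect_set (R i) \<subseteq> rect_set (R (Suc i)) \<and> bridged \<sigma> (R i) (R (Suc i))" if "i \<in> {1..n}" for i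
    using steps that growth_chain_mono_bridged unfolding R_def by (simp add: less_imp_le)
  have "good_seq p n R"
    unfolding good_seq_def
  proof (intro conjI)
    show "\<forall>i\<in>{1..n + 1}. is_rect (R i)" "(0,0) \<in> rect_set (R 1)"
      using growth_chain_grow_step unfolding R_def by blast+
    show "\<forall>i\<in>{1..n}. rect_set (R i) \<subseteq> rect_set (R (Suc i))" using nested by blast
    show "\<forall>i\<in>{1..n}. let a = real_of_int (width (R i)); b = real_of_int (height (R i));
        s = real_of_int (width (R (Suc i)) - width (R i));
        t = real_of_int (height (R (Suc i)) - height (R i)) in
        (s \<ge> a * sqrt (qpar p) \<or> t \<ge> b * sqrt (qpar p)) \<and>
        s < a * sqrt (qpar p) + 4 \<and> t < b * sqrt (qpar p) + 4"
      using steps unfolding good_step_def Let_def by blast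
  qed (use assms(2-5) in auto)
  then show ?thesis
    using nested bridged_imp_Dev growth_chain_Gev unfolding R_def by blast
qed

end

theorem lemma4:
  fixes p :: real and \<sigma> :: config
  assumes "0 < p" "p < 1/10"
    and "\<sigma> (0,0) = Active \<or> \<sigma> (0,0) = Empty"
    and "\<forall>x. x \<noteq> (0,0) \<longrightarrow> \<sigma> x = Occupied \<or> \<sigma> x = Empty"
    and "indefinite_growth \<sigma>"
  shows "Eev p \<sigma> \<or>
    (\<exists>n R. good_seq p n R \<and> Gev \<sigma> (R 1) \<and> (\<forall>i\<in>{1..n}. Dev \<sigma> (R i) (R (Suc i))))"
proof -
  have seed: "\<forall>x. x \<noteq> (0,0) \<longrightarrow> \<sigma> x \<noteq> Active"
    using assms(4) by (metis state.distinct(3) state.distinct(5))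
  let ?a = "\<lambda>j. width (growth_chain \<sigma> j)" and ?b = "\<lambda>j. height (growth_chain \<sigma> j)"
  have "?a 0 = 1" "?b 0 = 1" by (simp_all add: width_def height_def)
  then consider
      j where "max (?a j) (?b j) = Bpar p - Apar p" "min (?a j) (?b j) \<le> Apar p"
    | n idx where "1 \<le> n" "min (?a (idx 1)) (?b (idx 1)) = Apar p"
        "?a (idx n) + ?b (idx n) \<le> Bpar p" "Bpar p < ?a (idx (Suc n)) + ?b (idx (Suc n))"
        "\<forall>i\<in>{1..n}. idx i < idx (Suc i) \<and>
           good_step (sqrt (qpar p)) (?a (idx i)) (?b (idx i)) (?a (idx (Suc i))) (?b (idx (Suc i)))"
    using dimension_walk_dichotomy[of ?a ?b "Apar p" "Bpar p" "sqrt (qpar p)"]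
      growth_chain_unit_steps[OF assms(5) seed] growth_chain_perimeter_grows[OF assms(5) seed]
      parameter_bounds[OF assms(1,2)]
    by blast
  then show ?thesis
  proof cases
    case 1
    then show ?thesis using growth_chain_Eev[OF assms(5) seed] by blast
  next
    case 2
    then show ?thesis using growth_chain_good_seq[OF assms(5) seed] by blast
  qed
qed

end
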